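(* Let $F\in\mathcal{B}((\mathbb{C}^2)^{\otimes d})$ with $\|F\|\leq 1$, and fix $s_0\leq n-2$. Then \[ \big|\langle\psi_{s}|(F\otimes I^{\otimes n-d})|\psi_{s}\rangle-\langle\psi_{r}|(F\otimes I^{\otimes n-d})|\psi_{r}\rangle\big|=O\big(\sqrt{d s_0/n}\big)\qquad\text{for all } r,s\leq s_0, \] where the $O$-notation refers to $n\to\infty$.
   Context: On $n$ qubits, let $\omega=e^{2\pi i/n}$, $\sigma_m^-=|0\rangle\langle1|$ on qubit $m$, $S_-=\sum_{m=1}^n\sigma_m^-$, $|\Psi\rangle=\overline{\omega}\sum_{m=1}^n\omega^m\sigma_m^-|1\rangle^{\otimes n}$, and for $s=0,\dots,n-2$, $|\psi_s\rangle=S_-^s|\Psi\rangle/\|S_-^s|\Psi\rangle\|$. $F\otimes I^{\otimes(n-d)}$ acts as $F$ on the first $d$ qubits. *)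

theory Defs
  imports "HOL-Analysis.Analysis"
begin

text \<open>Computational basis of n qubits: bit strings b :: nat \<Rightarrow> bool supported on
  {0..<n}; qubit m (1-based, m = 1..n) is index m-1. True = |1>, False = |0>.\<close>

type_synonym bits = "nat \<Rightarrow> bool"
type_synonym qvec = "bits \<Rightarrow> complex"
type_synonym qop = "bits \<Rightarrow> bits \<Rightarrow> complex"

definition basis :: "nat \<Rightarrow> bits set" where
  "basis n = {b. \<forall>i\<ge>n. \<not> b i}"

definition inner_q :: "nat \<Rightarrow> qvec \<Rightarrow> qvec \<Rightarrow> complex" where
  "inner_q n u v = (\<Sum>b\<in>basis n. cnj (u b) * v b)"

definition norm_q :: "nat \<Rightarrow> qvec \<Rightarrow> real" where
  "norm_q n v = sqrt (\<Sum>b\<in>basis n. (cmod (v b))\<^sup>2)"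

definition apply_op :: "nat \<Rightarrow> qop \<Rightarrow> qvec \<Rightarrow> qvec" where
  "apply_op d F v = (\<lambda>b. \<Sum>a\<in>basis d. F b a * v a)"

definition op_norm_le1 :: "nat \<Rightarrow> qop \<Rightarrow> bool" where
  "op_norm_le1 d F \<longleftrightarrow> (\<forall>v. norm_q d (apply_op d F v) \<le> norm_q d v)"

text \<open>F \<otimes> I^(n-d): F acts on the first d qubits (indices 0..d-1).\<close>
definition tensor_id :: "nat \<Rightarrow> qop \<Rightarrow> qvec \<Rightarrow> qvec" where
  "tensor_id d F v = (\<lambda>b. \<Sum>a\<in>basis d.
      F (\<lambda>i. i < d \<and> b i) a * v (\<lambda>i. if i < d then a i else b i))"

definition sigma_minus :: "nat \<Rightarrow> qvec \<Rightarrow> qvec" where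
  "sigma_minus k v = (\<lambda>b. if b k then 0 else v (b(k := True)))"

definition S_minus :: "nat \<Rightarrow> qvec \<Rightarrow> qvec" where
  "S_minus n v = (\<lambda>b. \<Sum>k<n. sigma_minus k v b)"

definition all_ones :: "nat \<Rightarrow> qvec" where
  "all_ones n = (\<lambda>b. if b = (\<lambda>i. i < n) then 1 else 0)"

definition omega :: "nat \<Rightarrow> complex" where
  "omega n = cis (2 * pi / real n)"

definition Psi :: "nat \<Rightarrow> qvec" where
  "Psi n = (\<lambda>b. cnj (omega n) *
      (\<Sum>m\<in>{1..n}. omega n ^ m * sigma_minus (m - 1) (all_ones n) b))"

definition psi :: "nat \<Rightarrow> nat \<Rightarrow> qvec" where
  "psi n s = (let v = (S_minus n ^^ s) (Psi n)
              in (\<lambda>b. v b / complex_of_real (norm_q n v)))"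

definition expect :: "nat \<Rightarrow> qvec \<Rightarrow> (qvec \<Rightarrow> qvec) \<Rightarrow> complex" where
  "expect n v A = inner_q n v (A v)"

end

theory Submission
  imports Defs
begin

text \<open>The vector \<open>S_minus^s Psi\<close> has amplitude \<open>s! \<Sum>i\<in>Z. omega^i\<close> on the basis string whose
  set of zeros \<open>Z\<close> has \<open>s + 1\<close> elements, and vanishes elsewhere. The modulus of this amplitude
  is invariant under cyclic rotation of the qubits, so in \<open>psi n s\<close> every qubit is \<open>0\<close> with the
  same probability \<open>(s + 1)/n\<close>, and the first \<open>d\<close> qubits are not all \<open>1\<close> with probability
  \<open>1 - p \<le> d (s + 1)/n\<close>. Splitting \<open>psi n s\<close> into its component on strings starting with
  \<open>d\<close> ones and the rest, Cauchy-Schwarz shows that the expectation of \<open>F \<otimes> I\<close> is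
  \<open>p F\<^sub>1\<^sub>1 + O(sqrt (1 - p))\<close>, where \<open>F\<^sub>1\<^sub>1\<close> is the all-ones diagonal entry of \<open>F\<close>.
  Comparing two such states gives the bound.\<close>

lemma finite_basis: "finite (basis n)"
proof -
  have "basis n \<subseteq> (\<lambda>S i. i \<in> S) ` Pow {..<n}"
  proof
    fix b assume "b \<in> basis n"
    hence "b = (\<lambda>i. i \<in> {i. i < n \<and> b i})" unfolding basis_def by (auto simp: not_le[symmetric])
    thus "b \<in> (\<lambda>S i. i \<in> S) ` Pow {..<n}" by blast
  qed
  thus ?thesis by (rule finite_subset) auto
qed

lemma norm_omega [simp]: "cmod (omega n) = 1"
  by (simp add: omega_def)

lemma omega_power_self: "omega n ^ n = 1"
proof (cases "n = 0")
  case False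
  have "omega n ^ n = cis (real n * (2 * pi / real n))" unfolding omega_def by (rule Complex.DeMoivre)
  also have "\<dots> = 1" using False by simp
  finally show ?thesis .
qed simp

lemma omega_power_mod: "omega n ^ (m mod n) = omega n ^ m"
proof -
  have "omega n ^ m = omega n ^ (m mod n + n * (m div n))" by simp
  also have "\<dots> = omega n ^ (m mod n) * (omega n ^ n) ^ (m div n)" by (simp only: power_add power_mult)
  finally show ?thesis by (simp add: omega_power_self)
qed

lemma omega_neq_1: assumes "n \<ge> 2" shows "omega n \<noteq> 1"
proof
  assume "omega n = 1"
  hence "cos (2 * pi / real n) = 1" unfolding omega_def by (metis cis.sel(1) one_complex.sel(1))
  moreover have "0 < 2 * pi / real n" "2 * pi / real n \<le> pi" using assms by (auto simp: field_simps)
  ultimately show False using cos_monotone_0_pi[of 0 "2 * pi / real n"] by simp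
qed

lemma cnj_omega_mult_omega: "cnj (omega n) * omega n = 1"
  unfolding omega_def cis_cnj cis_mult by simp

subsection \<open>The lowered states in closed form\<close>

definition zero_set :: "nat \<Rightarrow> bits \<Rightarrow> nat set" where
  "zero_set n b = {i. i < n \<and> \<not> b i}"

definition root_sum :: "nat \<Rightarrow> nat set \<Rightarrow> complex" where
  "root_sum n Z = (\<Sum>i\<in>Z. omega n ^ i)"

definition lowered_Psi :: "nat \<Rightarrow> nat \<Rightarrow> qvec" where
  "lowered_Psi n s b =
     (if b \<in> basis n \<and> card (zero_set n b) = Suc s then of_nat (fact s) * root_sum n (zero_set n b) else 0)"

lemma finite_zero_set [simp]: "finite (zero_set n b)"
  unfolding zero_set_def by auto

lemma single_zero_iff:
  assumes "j < n"
  shows "b = (\<lambda>i. i < n \<and> i \<noteq> j) \<longleftrightarrow> b \<in> basis n \<and> zero_set n b = {j}"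
proof
  assume "b \<in> basis n \<and> zero_set n b = {j}"
  thus "b = (\<lambda>i. i < n \<and> i \<noteq> j)"
    unfolding basis_def zero_set_def by (auto simp: fun_eq_iff set_eq_iff not_le[symmetric])
qed (use assms in \<open>auto simp: basis_def zero_set_def\<close>)

lemma Psi_eq_lowered_Psi: "Psi n = lowered_Psi n 0"
proof
  fix b
  have "Psi n b = (\<Sum>j<n. omega n ^ j * (if b = (\<lambda>i. i < n \<and> i \<noteq> j) then 1 else 0))"
  proof -
    have shift: "(\<Sum>m\<in>{1..n}. omega n ^ m * sigma_minus (m - 1) (all_ones n) b)
        = (\<Sum>j<n. omega n * omega n ^ j * sigma_minus j (all_ones n) b)"
      using sum.atLeast1_atMost_eq[of "\<lambda>m. omega n ^ m * sigma_minus (m - 1) (all_ones n) b" n] by simp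
    have "Psi n b = (\<Sum>j<n. (cnj (omega n) * omega n) * omega n ^ j * sigma_minus j (all_ones n) b)"
      unfolding Psi_def shift by (simp add: sum_distrib_left mult.assoc)
    also have "\<dots> = (\<Sum>j<n. omega n ^ j * sigma_minus j (all_ones n) b)"
      by (simp add: cnj_omega_mult_omega)
    also have "\<dots> = (\<Sum>j<n. omega n ^ j * (if b = (\<lambda>i. i < n \<and> i \<noteq> j) then 1 else 0))"
      by (intro sum.cong refl)
        (auto simp: sigma_minus_def all_ones_def fun_eq_iff)
    finally show ?thesis .
  qed
  also have "\<dots> = lowered_Psi n 0 b"
  proof (cases "b \<in> basis n \<and> card (zero_set n b) = 1")
    case True
    then obtain j where j: "zero_set n b = {j}" by (auto simp: card_Suc_eq)
    hence "j < n" unfolding zero_set_def by auto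
    hence "(\<Sum>j'<n. omega n ^ j' * (if b = (\<lambda>i. i < n \<and> i \<noteq> j') then 1 else 0)) = omega n ^ j"
      using True j single_zero_iff[of _ n b] by (simp add: if_distrib cong: if_cong)
    thus ?thesis using True j by (simp add: lowered_Psi_def root_sum_def)
  next
    case False
    hence "b \<noteq> (\<lambda>i. i < n \<and> i \<noteq> j)" if "j < n" for j
      using single_zero_iff[OF that] by auto
    thus ?thesis using False by (auto simp: lowered_Psi_def)
  qed
  finally show "Psi n b = lowered_Psi n 0 b" .
qed

lemma S_minus_lowered_Psi: "S_minus n (lowered_Psi n s) = lowered_Psi n (Suc s)"
proof
  fix b
  have S: "S_minus n (lowered_Psi n s) b = (\<Sum>k<n. if b k then 0 else lowered_Psi n s (b(k := True)))"
    unfolding S_minus_def sigma_minus_def by simp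
  show "S_minus n (lowered_Psi n s) b = lowered_Psi n (Suc s) b"
  proof (cases "b \<in> basis n")
    case False
    then obtain i where i: "i \<ge> n" "b i" unfolding basis_def by auto
    hence "b(k := True) \<notin> basis n" if "k < n" for k
      using that unfolding basis_def by auto
    hence "S_minus n (lowered_Psi n s) b = 0" unfolding S lowered_Psi_def by (intro sum.neutral) auto
    thus ?thesis using False unfolding lowered_Psi_def by simp
  next
    case True
    let ?Z = "zero_set n b"
    have S': "S_minus n (lowered_Psi n s) b = (\<Sum>k\<in>?Z. lowered_Psi n s (b(k := True)))"
      unfolding S by (rule sum.mono_neutral_cong_right) (auto simp: zero_set_def)
    have raise: "lowered_Psi n s (b(k := True)) =
        (if card ?Z = Suc (Suc s) then of_nat (fact s) * (root_sum n ?Z - omega n ^ k) else 0)"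
      if k: "k \<in> ?Z" for k
    proof -
      have "b(k := True) \<in> basis n" using True k unfolding basis_def zero_set_def by auto
      moreover have "zero_set n (b(k := True)) = ?Z - {k}" unfolding zero_set_def by auto
      moreover have "card ?Z \<noteq> 0" using k by auto
      ultimately show ?thesis
        unfolding lowered_Psi_def root_sum_def using k by (auto simp: sum_diff1)
    qed
    show ?thesis
    proof (cases "card ?Z = Suc (Suc s)")
      case c: True
      have "S_minus n (lowered_Psi n s) b = (\<Sum>k\<in>?Z. of_nat (fact s) * (root_sum n ?Z - omega n ^ k))"
        unfolding S' using c by (intro sum.cong refl) (simp add: raise)
      also have "\<dots> = of_nat (fact s) * (of_nat (card ?Z) * root_sum n ?Z - root_sum n ?Z)"
        by (simp add: sum_distrib_left[symmetric] sum_subtractf root_sum_def)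
      also have "\<dots> = of_nat (fact (Suc s)) * root_sum n ?Z"
        using c by (simp add: algebra_simps)
      finally show ?thesis unfolding lowered_Psi_def using True c by simp
    next
      case False
      hence "S_minus n (lowered_Psi n s) b = 0" unfolding S' by (simp add: raise)
      thus ?thesis using False unfolding lowered_Psi_def by simp
    qed
  qed
qed

lemma S_minus_power_Psi: "(S_minus n ^^ s) (Psi n) = lowered_Psi n s"
  by (induction s) (simp_all add: Psi_eq_lowered_Psi S_minus_lowered_Psi)

definition sq_norm_q :: "nat \<Rightarrow> qvec \<Rightarrow> real" where
  "sq_norm_q n v = (\<Sum>b\<in>basis n. (cmod (v b))\<^sup>2)"

lemma norm_q_eq_sqrt: "norm_q n v = sqrt (sq_norm_q n v)"
  unfolding norm_q_def sq_norm_q_def ..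

lemma sq_norm_q_nonneg: "sq_norm_q n v \<ge> 0"
  unfolding sq_norm_q_def by (intro sum_nonneg) auto

lemma sq_norm_q_pos: "b \<in> basis n \<Longrightarrow> v b \<noteq> 0 \<Longrightarrow> sq_norm_q n v > 0"
  unfolding sq_norm_q_def by (rule sum_pos2[OF finite_basis]) auto

lemma norm_inner_q_le: "cmod (inner_q n u w) \<le> sqrt (sq_norm_q n u) * sqrt (sq_norm_q n w)"
proof -
  have "cmod (inner_q n u w) \<le> (\<Sum>b\<in>basis n. \<bar>cmod (u b)\<bar> * \<bar>cmod (w b)\<bar>)"
    unfolding inner_q_def using norm_sum[of "\<lambda>b. cnj (u b) * w b" "basis n"] by (simp add: norm_mult)
  also have "\<dots> \<le> L2_set (\<lambda>b. cmod (u b)) (basis n) * L2_set (\<lambda>b. cmod (w b)) (basis n)"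
    by (rule L2_set_mult_ineq)
  finally show ?thesis unfolding L2_set_def sq_norm_q_def .
qed

lemma inner_q_add_left: "inner_q n (\<lambda>b. u b + w b) x = inner_q n u x + inner_q n w x"
  unfolding inner_q_def by (simp add: distrib_right sum.distrib)

lemma inner_q_add_right: "inner_q n x (\<lambda>b. u b + w b) = inner_q n x u + inner_q n x w"
  unfolding inner_q_def by (simp add: distrib_left sum.distrib)

lemma tensor_id_add: "tensor_id d F (\<lambda>b. u b + w b) = (\<lambda>b. tensor_id d F u b + tensor_id d F w b)"
  unfolding tensor_id_def by (simp add: fun_eq_iff distrib_left sum.distrib)

definition join_bits :: "nat \<Rightarrow> bits \<Rightarrow> bits \<Rightarrow> bits" where
  "join_bits d a c = (\<lambda>i. if i < d then a i else c i)"

definition upper_basis :: "nat \<Rightarrow> nat \<Rightarrow> bits set" where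
  "upper_basis d n = {c \<in> basis n. \<forall>i<d. \<not> c i}"

lemma bij_betw_join_bits:
  assumes "d \<le> n"
  shows "bij_betw (\<lambda>(a, c). join_bits d a c) (basis d \<times> upper_basis d n) (basis n)"
  by (rule bij_betw_byWitness[where f' = "\<lambda>b. ((\<lambda>i. i < d \<and> b i), (\<lambda>i. d \<le> i \<and> b i))"])
    (use assms in \<open>auto simp: join_bits_def basis_def upper_basis_def fun_eq_iff not_le[symmetric]\<close>)

lemma sum_basis_split:
  assumes "d \<le> n"
  shows "(\<Sum>b\<in>basis n. g b) = (\<Sum>a\<in>basis d. \<Sum>c\<in>upper_basis d n. g (join_bits d a c))"
  using sum.reindex_bij_betw[OF bij_betw_join_bits[OF assms], of g]
  by (simp add: sum.cartesian_product case_prod_unfold)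

lemma tensor_id_join_bits:
  assumes "a \<in> basis d"
  shows "tensor_id d F v (join_bits d a c) = apply_op d F (\<lambda>a'. v (join_bits d a' c)) a"
proof -
  have "(\<lambda>i. i < d \<and> join_bits d a c i) = a"
    using assms unfolding join_bits_def basis_def by (auto simp: fun_eq_iff)
  moreover have "(\<lambda>i. if i < d then a' i else join_bits d a c i) = join_bits d a' c" for a'
    unfolding join_bits_def by auto
  ultimately show ?thesis unfolding tensor_id_def apply_op_def by simp
qed

lemma sq_norm_tensor_id_le:
  assumes dn: "d \<le> n" and F: "op_norm_le1 d F"
  shows "sq_norm_q n (tensor_id d F v) \<le> sq_norm_q n v"
proof -
  define w where "w c = (\<lambda>a. v (join_bits d a c))" for c
  have "sq_norm_q n (tensor_id d F v) = (\<Sum>c\<in>upper_basis d n. sq_norm_q d (apply_op d F (w c)))"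
    unfolding sq_norm_q_def sum_basis_split[OF dn] w_def
    by (subst sum.swap) (simp add: tensor_id_join_bits)
  also have "\<dots> \<le> (\<Sum>c\<in>upper_basis d n. sq_norm_q d (w c))"
  proof (rule sum_mono)
    fix c
    have "sqrt (sq_norm_q d (apply_op d F (w c))) \<le> sqrt (sq_norm_q d (w c))"
      using F unfolding op_norm_le1_def norm_q_eq_sqrt by blast
    thus "sq_norm_q d (apply_op d F (w c)) \<le> sq_norm_q d (w c)" by simp
  qed
  also have "\<dots> = sq_norm_q n v"
    unfolding sq_norm_q_def w_def sum_basis_split[OF dn] by (rule sum.swap)
  finally show ?thesis .
qed

lemma norm_inner_tensor_id_le:
  assumes "d \<le> n" "op_norm_le1 d F"
  shows "cmod (inner_q n u (tensor_id d F w)) \<le> sqrt (sq_norm_q n u) * sqrt (sq_norm_q n w)"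
proof -
  have "cmod (inner_q n u (tensor_id d F w)) \<le> sqrt (sq_norm_q n u) * sqrt (sq_norm_q n (tensor_id d F w))"
    by (rule norm_inner_q_le)
  also have "\<dots> \<le> sqrt (sq_norm_q n u) * sqrt (sq_norm_q n w)"
    by (intro mult_left_mono real_sqrt_le_mono sq_norm_tensor_id_le[OF assms]) (simp add: sq_norm_q_nonneg)
  finally show ?thesis .
qed

lemma norm_entry_le_1:
  assumes F: "op_norm_le1 d F" and a: "a \<in> basis d" and b: "b \<in> basis d"
  shows "cmod (F b a) \<le> 1"
proof -
  define v :: qvec where "v a' = (if a' = a then 1 else 0)" for a'
  have "apply_op d F v = (\<lambda>b'. F b' a)"
    unfolding apply_op_def v_def using a finite_basis[of d]
    by (simp add: if_distrib[where f = "\<lambda>x. F _ _ * x"] cong: if_cong)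
  moreover have "norm_q d v = 1"
    unfolding norm_q_def v_def using a finite_basis[of d]
    by (simp add: if_distrib[where f = "\<lambda>x. (cmod x)\<^sup>2"] cong: if_cong)
  ultimately have "sqrt (sq_norm_q d (\<lambda>b'. F b' a)) \<le> 1"
    using F unfolding op_norm_le1_def norm_q_eq_sqrt by metis
  moreover have "(cmod (F b a))\<^sup>2 \<le> sq_norm_q d (\<lambda>b'. F b' a)"
    unfolding sq_norm_q_def by (rule member_le_sum) (use b finite_basis[of d] in auto)
  ultimately have "(cmod (F b a))\<^sup>2 \<le> 1" by simp
  thus ?thesis by (simp add: abs_square_le_1)
qed

subsection \<open>Expectations are governed by the all-ones corner\<close>

definition corner_part :: "nat \<Rightarrow> qvec \<Rightarrow> qvec" where
  "corner_part d v b = (if \<forall>i<d. b i then v b else 0)"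

definition off_corner_part :: "nat \<Rightarrow> qvec \<Rightarrow> qvec" where
  "off_corner_part d v b = (if \<forall>i<d. b i then 0 else v b)"

lemma corner_part_add_off_corner_part: "(\<lambda>b. corner_part d v b + off_corner_part d v b) = v"
  by (intro ext) (auto simp: corner_part_def off_corner_part_def)

lemma sq_norm_q_corner_decomp:
  "sq_norm_q n v = sq_norm_q n (corner_part d v) + sq_norm_q n (off_corner_part d v)"
  unfolding sq_norm_q_def corner_part_def off_corner_part_def
  by (subst sum.distrib[symmetric]) (intro sum.cong, auto)

lemma tensor_id_corner_part:
  "tensor_id d F (corner_part d v) b = F (\<lambda>i. i < d \<and> b i) (\<lambda>i. i < d) * v (\<lambda>i. i < d \<or> b i)"
proof -
  have "corner_part d v (\<lambda>i. if i < d then a i else b i) =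
      (if a = (\<lambda>i. i < d) then v (\<lambda>i. i < d \<or> b i) else 0)" if "a \<in> basis d" for a
    using that unfolding corner_part_def basis_def by (auto simp: fun_eq_iff) (metis not_le)
  hence "tensor_id d F (corner_part d v) b =
      (\<Sum>a\<in>basis d. if a = (\<lambda>i. i < d) then F (\<lambda>i. i < d \<and> b i) a * v (\<lambda>i. i < d \<or> b i) else 0)"
    unfolding tensor_id_def by (intro sum.cong refl) simp
  also have "\<dots> = F (\<lambda>i. i < d \<and> b i) (\<lambda>i. i < d) * v (\<lambda>i. i < d \<or> b i)"
    using finite_basis[of d] by (subst sum.delta) (auto simp: basis_def)
  finally show ?thesis .
qed

lemma inner_corner_part_tensor_id:
  "inner_q n (corner_part d v) (tensor_id d F (corner_part d v)) =
     F (\<lambda>i. i < d) (\<lambda>i. i < d) * of_real (sq_norm_q n (corner_part d v))"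
proof -
  have "cnj (corner_part d v b) * tensor_id d F (corner_part d v) b =
      F (\<lambda>i. i < d) (\<lambda>i. i < d) * of_real ((cmod (corner_part d v b))\<^sup>2)" for b
  proof (cases "\<forall>i<d. b i")
    case True
    moreover have "(\<lambda>i. i < d \<and> b i) = (\<lambda>i. i < d)" "(\<lambda>i. i < d \<or> b i) = b" using True by auto
    moreover have "v b * cnj (v b) = of_real ((cmod (v b))\<^sup>2)" by (metis complex_norm_square of_real_power)
    ultimately show ?thesis unfolding tensor_id_corner_part corner_part_def
      by (simp add: mult.commute mult.left_commute)
  qed (auto simp: corner_part_def)
  thus ?thesis
    unfolding inner_q_def sq_norm_q_def by (simp add: sum_distrib_left)
qed

lemma expect_tensor_id_approx:
  assumes dn: "d \<le> n" and F: "op_norm_le1 d F" and v: "sq_norm_q n v = 1"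
  defines "p \<equiv> sq_norm_q n (corner_part d v)"
  shows "cmod (expect n v (tensor_id d F) - F (\<lambda>i. i < d) (\<lambda>i. i < d) * p) \<le> 3 * sqrt (1 - p)"
proof -
  let ?T = "tensor_id d F" and ?c = "corner_part d v" and ?o = "off_corner_part d v"
  have off: "sq_norm_q n ?o = 1 - p"
    using sq_norm_q_corner_decomp[of n v d] v unfolding p_def by simp
  have p: "0 \<le> p" "p \<le> 1"
    using off sq_norm_q_nonneg[of n ?c] sq_norm_q_nonneg[of n ?o] unfolding p_def by auto
  have "expect n v ?T = inner_q n ?c (?T ?c) + inner_q n ?c (?T ?o) + (inner_q n ?o (?T ?c) + inner_q n ?o (?T ?o))"
    unfolding expect_def
    by (subst (1 2) corner_part_add_off_corner_part[of d v, symmetric])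
      (simp only: tensor_id_add inner_q_add_left inner_q_add_right)
  hence "expect n v ?T - F (\<lambda>i. i < d) (\<lambda>i. i < d) * p =
      inner_q n ?c (?T ?o) + inner_q n ?o (?T ?c) + inner_q n ?o (?T ?o)"
    by (simp add: inner_corner_part_tensor_id p_def)
  hence "cmod (expect n v ?T - F (\<lambda>i. i < d) (\<lambda>i. i < d) * p)
      \<le> cmod (inner_q n ?c (?T ?o)) + cmod (inner_q n ?o (?T ?c)) + cmod (inner_q n ?o (?T ?o))"
    by (metis norm_triangle_le norm_triangle_ineq add_right_mono)
  also have "\<dots> \<le> sqrt p * sqrt (1 - p) + sqrt (1 - p) * sqrt p + sqrt (1 - p) * sqrt (1 - p)"
    using norm_inner_tensor_id_le[OF dn F] off unfolding p_def by (intro add_mono) metis+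
  also have "\<dots> \<le> 3 * sqrt (1 - p)"
    using p mult_right_mono[of "sqrt p" 1 "sqrt (1 - p)"] mult_right_mono[of "sqrt (1 - p)" 1 "sqrt (1 - p)"]
    by (simp add: mult.commute)
  finally show ?thesis .
qed

subsection \<open>Cyclic symmetry bounds the weight off the corner\<close>

lemma mod_add_right_cancel_nat: "((a::nat) + t) mod n = (b + t) mod n \<longleftrightarrow> a mod n = b mod n"
proof
  assume "(a + t) mod n = (b + t) mod n"
  then obtain q1 q2 where "a + t + n * q1 = b + t + n * q2" unfolding nat_mod_eq_iff by blast
  hence "a + n * q1 = b + n * q2" by simp
  thus "a mod n = b mod n" unfolding nat_mod_eq_iff by blast
qed (rule mod_add_cong, simp_all)

lemma bij_betw_add_mod:
  assumes "0 < n"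
  shows "bij_betw (\<lambda>j. (j + t) mod n) {..<n} {..<(n::nat)}"
proof -
  have inj: "inj_on (\<lambda>j. (j + t) mod n) {..<n}"
    by (auto simp: inj_on_def mod_add_right_cancel_nat)
  have "(\<lambda>j. (j + t) mod n) ` {..<n} = {..<n}"
    by (rule endo_inj_surj[OF _ _ inj]) (use assms in auto)
  thus ?thesis unfolding bij_betw_def using inj by blast
qed

definition rotate_bits :: "nat \<Rightarrow> nat \<Rightarrow> bits \<Rightarrow> bits" where
  "rotate_bits n t c = (\<lambda>j. if j < n then c ((j + t) mod n) else c j)"

lemma bij_betw_rotate_bits:
  assumes n: "0 < n"
  shows "bij_betw (rotate_bits n t) (basis n) (basis n)"
proof -
  have inj: "inj_on (rotate_bits n t) (basis n)"
  proof (rule inj_onI, rule ext)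
    fix c1 c2 i assume c: "c1 \<in> basis n" "c2 \<in> basis n" and eq: "rotate_bits n t c1 = rotate_bits n t c2"
    show "c1 i = c2 i"
    proof (cases "i < n")
      case True
      hence "i \<in> (\<lambda>j. (j + t) mod n) ` {..<n}"
        using bij_betw_imp_surj_on[OF bij_betw_add_mod[OF n, of t]] by simp
      then obtain j where j: "j < n" "i = (j + t) mod n" by auto
      have "rotate_bits n t c1 j = rotate_bits n t c2 j" using eq by simp
      thus ?thesis using j unfolding rotate_bits_def by simp
    next
      case False
      thus ?thesis using c by (simp add: basis_def)
    qed
  qed
  have "rotate_bits n t ` basis n \<subseteq> basis n"
    unfolding rotate_bits_def basis_def by auto
  hence "rotate_bits n t ` basis n = basis n" by (rule endo_inj_surj[OF finite_basis _ inj])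
  thus ?thesis unfolding bij_betw_def using inj by blast
qed

lemma bij_betw_zero_set_rotate_bits:
  assumes n: "0 < n"
  shows "bij_betw (\<lambda>j. (j + t) mod n) (zero_set n (rotate_bits n t c)) (zero_set n c)"
proof -
  have bij: "bij_betw (\<lambda>j. (j + t) mod n) {..<n} {..<n}" by (rule bij_betw_add_mod[OF n])
  have Z: "zero_set n (rotate_bits n t c) = {j \<in> {..<n}. (j + t) mod n \<in> zero_set n c}"
    using n unfolding zero_set_def rotate_bits_def by auto
  have "inj_on (\<lambda>j. (j + t) mod n) (zero_set n (rotate_bits n t c))"
    using bij_betw_imp_inj_on[OF bij] unfolding Z by (rule inj_on_subset) auto
  moreover have "zero_set n c \<subseteq> (\<lambda>j. (j + t) mod n) ` zero_set n (rotate_bits n t c)"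
  proof
    fix i assume i: "i \<in> zero_set n c"
    hence "i \<in> (\<lambda>j. (j + t) mod n) ` {..<n}" using bij_betw_imp_surj_on[OF bij] by (auto simp: zero_set_def)
    thus "i \<in> (\<lambda>j. (j + t) mod n) ` zero_set n (rotate_bits n t c)" using i unfolding Z by auto
  qed
  ultimately show ?thesis unfolding bij_betw_def Z by auto
qed

lemma norm_lowered_Psi_rotate_bits:
  assumes n: "0 < n"
  shows "cmod (lowered_Psi n s (rotate_bits n t c)) = cmod (lowered_Psi n s c)"
proof -
  let ?Z = "zero_set n (rotate_bits n t c)"
  note bij = bij_betw_zero_set_rotate_bits[OF n, of t c]
  have "root_sum n ?Z * omega n ^ t = (\<Sum>j\<in>?Z. omega n ^ ((j + t) mod n))"
    unfolding root_sum_def by (simp add: sum_distrib_right omega_power_mod power_add)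
  also have "\<dots> = root_sum n (zero_set n c)"
    unfolding root_sum_def by (rule sum.reindex_bij_betw[OF bij])
  finally have "cmod (root_sum n ?Z) = cmod (root_sum n (zero_set n c))"
    by (metis norm_mult norm_omega norm_power mult.right_neutral power_one)
  moreover have "rotate_bits n t c \<in> basis n \<longleftrightarrow> c \<in> basis n"
    unfolding basis_def rotate_bits_def by auto
  ultimately show ?thesis
    unfolding lowered_Psi_def bij_betw_same_card[OF bij] by (simp add: norm_mult)
qed

lemma zero_weight_rotation_invariant:
  fixes g :: "bits \<Rightarrow> 'a::comm_monoid_add"
  assumes n: "0 < n" and i: "i < n" and rot: "\<And>c. c \<in> basis n \<Longrightarrow> g (rotate_bits n i c) = g c"
  shows "(\<Sum>b\<in>basis n. if b i then 0 else g b) = (\<Sum>b\<in>basis n. if b 0 then 0 else g b)"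
proof -
  have "(\<Sum>b\<in>basis n. if b 0 then 0 else g b) =
      (\<Sum>c\<in>basis n. if rotate_bits n i c 0 then 0 else g (rotate_bits n i c))"
    by (rule sum.reindex_bij_betw[OF bij_betw_rotate_bits[OF n], symmetric])
  also have "\<dots> = (\<Sum>c\<in>basis n. if c i then 0 else g c)"
    using n i rot by (intro sum.cong refl) (simp add: rotate_bits_def)
  finally show ?thesis by simp
qed

lemma sum_zero_weights:
  fixes g :: "bits \<Rightarrow> 'a::comm_semiring_1"
  shows "(\<Sum>i<n. \<Sum>b\<in>basis n. if b i then 0 else g b) = (\<Sum>b\<in>basis n. g b * of_nat (card (zero_set n b)))"
proof -
  have "(\<Sum>i<n. if b i then 0 else g b) = g b * of_nat (card (zero_set n b))" for b
  proof -
    have "(\<Sum>i<n. if b i then 0 else g b) = (\<Sum>i\<in>zero_set n b. g b)"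
      by (rule sum.mono_neutral_cong_right) (auto simp: zero_set_def)
    thus ?thesis by (simp add: mult.commute)
  qed
  thus ?thesis by (subst sum.swap) simp
qed

lemma off_corner_weight_le:
  fixes g :: "bits \<Rightarrow> real"
  assumes n: "0 < n" and dn: "d \<le> n" and g0: "\<And>b. g b \<ge> 0" and g1: "(\<Sum>b\<in>basis n. g b) = 1"
    and card: "\<And>b. b \<in> basis n \<Longrightarrow> g b \<noteq> 0 \<Longrightarrow> card (zero_set n b) = k"
    and rot: "\<And>c t. c \<in> basis n \<Longrightarrow> g (rotate_bits n t c) = g c"
  shows "(\<Sum>b\<in>basis n. if \<forall>i<d. b i then 0 else g b) \<le> real d * real k / real n"
proof -
  define q where "q i = (\<Sum>b\<in>basis n. if b i then 0 else g b)" for i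
  have q: "q i = q 0" if "i < n" for i
    unfolding q_def by (rule zero_weight_rotation_invariant[OF n that]) (rule rot)
  have "(\<Sum>i<n. q i) = (\<Sum>i<n. q 0)" by (intro sum.cong refl q) simp
  hence "real n * q 0 = (\<Sum>i<n. q i)" by simp
  also have "\<dots> = (\<Sum>b\<in>basis n. g b * real k)"
    unfolding q_def sum_zero_weights
  proof (intro sum.cong refl)
    fix b assume "b \<in> basis n"
    thus "g b * real (card (zero_set n b)) = g b * real k" using card by (cases "g b = 0") auto
  qed
  also have "\<dots> = real k" using g1 by (simp add: sum_distrib_right[symmetric])
  finally have nq: "real n * q 0 = real k" .
  have "(\<Sum>b\<in>basis n. if \<forall>i<d. b i then 0 else g b) \<le> (\<Sum>b\<in>basis n. \<Sum>i<d. if b i then 0 else g b)"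
  proof (rule sum_mono)
    fix b
    show "(if \<forall>i<d. b i then 0 else g b) \<le> (\<Sum>i<d. if b i then 0 else g b)"
    proof (cases "\<forall>i<d. b i")
      case False
      then obtain i0 where i0: "i0 < d" "\<not> b i0" by blast
      hence "g b = (if b i0 then 0 else g b)" by simp
      also have "\<dots> \<le> (\<Sum>i<d. if b i then 0 else g b)"
        by (rule member_le_sum) (use i0 g0 in auto)
      finally show ?thesis using False by simp
    qed (simp add: sum_nonneg g0)
  qed
  also have "\<dots> = (\<Sum>i<d. q i)" unfolding q_def by (rule sum.swap)
  also have "\<dots> = (\<Sum>i<d. q 0)" using dn by (intro sum.cong refl q) simp
  also have "\<dots> = real d * q 0" by simp
  also have "\<dots> = real d * real k / real n" using nq n by (simp add: field_simps)
  finally show ?thesis .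
qed

lemma lowered_Psi_nonzero:
  assumes n: "n \<ge> 2" and s: "s \<le> n - 2"
  shows "\<exists>b\<in>basis n. lowered_Psi n s b \<noteq> 0"
proof -
  define bits_of where "bits_of Z = (\<lambda>i. i < n \<and> i \<notin> Z)" for Z :: "nat set"
  have bits_of: "bits_of Z \<in> basis n" "zero_set n (bits_of Z) = Z" if "Z \<subseteq> {..<n}" for Z
    using that unfolding bits_of_def basis_def zero_set_def by auto
  define Y where "Y = {2..<s + 2}"
  have Y: "Y \<subseteq> {..<n}" "card Y = s" "0 \<notin> Y" "1 \<notin> Y" "finite Y"
    using n s unfolding Y_def by auto
  txt \<open>As \<open>omega n \<noteq> 1\<close>, one of the zero sets \<open>{0} \<union> Y\<close>, \<open>{1} \<union> Y\<close> carries a nonzero amplitude.\<close>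
  have "omega n ^ 0 + root_sum n Y \<noteq> 0 \<or> omega n ^ 1 + root_sum n Y \<noteq> 0"
    using omega_neq_1[OF n] by (metis add_right_cancel power_0 power_one_right)
  then obtain j :: nat where j: "j \<in> {0, 1}" "omega n ^ j + root_sum n Y \<noteq> 0" by blast
  have sub: "insert j Y \<subseteq> {..<n}" and jY: "j \<notin> Y" using Y j n by auto
  have "lowered_Psi n s (bits_of (insert j Y)) = of_nat (fact s) * (omega n ^ j + root_sum n Y)"
    unfolding lowered_Psi_def using bits_of[OF sub] jY Y by (simp add: root_sum_def)
  thus ?thesis using bits_of[OF sub] j(2) by (intro bexI[of _ "bits_of (insert j Y)"]) simp_all
qed

lemma psi_eq_normalized:
  "psi n s = (\<lambda>b. lowered_Psi n s b / of_real (sqrt (sq_norm_q n (lowered_Psi n s))))"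
  unfolding psi_def Let_def S_minus_power_Psi norm_q_eq_sqrt ..

lemma sq_norm_q_psi:
  assumes "n \<ge> 2" "s \<le> n - 2"
  shows "sq_norm_q n (psi n s) = 1"
proof -
  obtain b where "b \<in> basis n" "lowered_Psi n s b \<noteq> 0" using lowered_Psi_nonzero[OF assms] by blast
  hence "sq_norm_q n (lowered_Psi n s) > 0" by (rule sq_norm_q_pos)
  thus ?thesis unfolding psi_eq_normalized
    by (simp add: sq_norm_q_def norm_divide power_divide sum_divide_distrib[symmetric])
qed

lemma sq_norm_off_corner_psi_le:
  assumes n: "n \<ge> 2" and s: "s \<le> n - 2" and dn: "d \<le> n"
  shows "sq_norm_q n (off_corner_part d (psi n s)) \<le> real d * real (Suc s) / real n"
proof -
  define g where "g b = (cmod (psi n s b))\<^sup>2" for b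
  have "sq_norm_q n (off_corner_part d (psi n s)) = (\<Sum>b\<in>basis n. if \<forall>i<d. b i then 0 else g b)"
    unfolding sq_norm_q_def off_corner_part_def g_def by (intro sum.cong) auto
  also have "\<dots> \<le> real d * real (Suc s) / real n"
  proof (rule off_corner_weight_le[OF _ dn])
    show "(\<Sum>b\<in>basis n. g b) = 1" using sq_norm_q_psi[OF n s] unfolding g_def sq_norm_q_def .
    show "card (zero_set n b) = Suc s" if "b \<in> basis n" "g b \<noteq> 0" for b
      using that unfolding g_def psi_eq_normalized lowered_Psi_def by (auto split: if_splits)
    show "g (rotate_bits n t c) = g c" for c t
      unfolding g_def psi_eq_normalized using n by (simp add: norm_divide norm_lowered_Psi_rotate_bits)
  qed (use n in \<open>auto simp: g_def\<close>)
  finally show ?thesis .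
qed

lemma expect_psi_approx:
  assumes n: "n \<ge> 2" and s: "s \<le> n - 2" and dn: "d \<le> n" and F: "op_norm_le1 d F"
  obtains p where "0 \<le> p" "p \<le> 1" "1 - p \<le> real d * real (Suc s) / real n"
    "cmod (expect n (psi n s) (tensor_id d F) - F (\<lambda>i. i < d) (\<lambda>i. i < d) * p) \<le> 3 * sqrt (1 - p)"
proof
  let ?p = "sq_norm_q n (corner_part d (psi n s))"
  have decomp: "1 = ?p + sq_norm_q n (off_corner_part d (psi n s))"
    using sq_norm_q_corner_decomp[of n "psi n s" d] sq_norm_q_psi[OF n s] by simp
  thus "0 \<le> ?p" "?p \<le> 1"
    using sq_norm_q_nonneg[of n "corner_part d (psi n s)"] sq_norm_q_nonneg[of n "off_corner_part d (psi n s)"]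
    by linarith+
  show "1 - ?p \<le> real d * real (Suc s) / real n"
    using decomp sq_norm_off_corner_psi_le[OF n s dn] by simp
  show "cmod (expect n (psi n s) (tensor_id d F) - F (\<lambda>i. i < d) (\<lambda>i. i < d) * ?p) \<le> 3 * sqrt (1 - ?p)"
    by (rule expect_tensor_id_approx[OF dn F sq_norm_q_psi[OF n s]])
qed

lemma norm_diff_le_of_approx:
  fixes a b c :: complex and p q x :: real
  assumes c: "cmod c \<le> 1"
    and a: "cmod (a - c * p) \<le> 3 * sqrt (1 - p)" and b: "cmod (b - c * q) \<le> 3 * sqrt (1 - q)"
    and pq: "0 \<le> p" "p \<le> 1" "0 \<le> q" "q \<le> 1" and x: "1 - p \<le> x" "1 - q \<le> x"
  shows "cmod (a - b) \<le> 7 * sqrt x"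
proof -
  define m where "m = max (1 - p) (1 - q)"
  have m: "0 \<le> m" "m \<le> 1" "m \<le> x" using pq x unfolding m_def by auto
  have "\<bar>p - q\<bar> \<le> m" using pq unfolding m_def by auto
  also have "m \<le> sqrt m"
  proof -
    have "sqrt m * sqrt m \<le> 1 * sqrt m" using m by (intro mult_right_mono) auto
    thus ?thesis using m by simp
  qed
  also have "\<dots> \<le> sqrt x" using m by simp
  finally have "cmod c * \<bar>p - q\<bar> \<le> sqrt x"
    using c by (meson abs_ge_zero mult_left_le_one_le norm_ge_zero order_trans)
  hence "cmod (c * of_real (p - q)) \<le> sqrt x" by (simp only: norm_mult norm_of_real)
  moreover have "sqrt (1 - p) \<le> sqrt x" "sqrt (1 - q) \<le> sqrt x" using x by simp_all
  moreover have "a - b = (a - c * p) - (b - c * q) + c * of_real (p - q)"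
    by (simp add: algebra_simps)
  hence "cmod (a - b) \<le> cmod ((a - c * p) - (b - c * q)) + cmod (c * of_real (p - q))"
    by (simp only: norm_triangle_ineq)
  ultimately show ?thesis
    using a b norm_triangle_ineq4[of "a - c * p" "b - c * q"] by linarith
qed

lemma seven_sqrt_Suc_le:
  assumes "s \<ge> 1"
  shows "7 * sqrt (real d * real (Suc s) / real n) \<le> 11 * sqrt (real d * real s / real n)"
proof -
  have "real d * (49 * real (Suc s)) \<le> real d * (121 * real s)"
    using assms by (intro mult_left_mono) auto
  hence "49 * (real d * real (Suc s) / real n) \<le> 121 * (real d * real s / real n)"
    using divide_right_mono[of _ _ "real n"] by (simp add: algebra_simps)
  hence "sqrt 49 * sqrt (real d * real (Suc s) / real n) \<le> sqrt 121 * sqrt (real d * real s / real n)"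
    unfolding real_sqrt_mult[symmetric] by (rule real_sqrt_le_mono)
  moreover have "sqrt 49 = (7::real)" "sqrt 121 = (11::real)"
    using real_sqrt_abs[of 7] real_sqrt_abs[of 11] by simp_all
  ultimately show ?thesis by simp
qed

theorem theorem7:
  shows "\<exists>C::real. \<exists>N::nat. \<forall>n\<ge>N. \<forall>d\<le>n. \<forall>F::qop. op_norm_le1 d F \<longrightarrow>
     (\<forall>s0 r s. s0 \<le> n - 2 \<and> r \<le> s0 \<and> s \<le> s0 \<longrightarrow>
        cmod (expect n (psi n s) (tensor_id d F) - expect n (psi n r) (tensor_id d F))
          \<le> C * sqrt (real d * real s0 / real n))"
proof (intro exI[of _ "11::real"] exI[of _ "2::nat"] allI impI, elim conjE)
  fix n d F s0 r s
  assume n: "2 \<le> n" and dn: "d \<le> n" and F: "op_norm_le1 d F" and s0: "s0 \<le> n - 2"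
    and r: "r \<le> s0" and s: "s \<le> s0"
  define x where "x = real d * real (Suc s0) / real n"
  have x: "real d * real (Suc t) / real n \<le> x" if "t \<le> s0" for t
    unfolding x_def using that by (intro divide_right_mono mult_left_mono) auto
  obtain ps where ps: "0 \<le> ps" "ps \<le> 1" "1 - ps \<le> x"
    "cmod (expect n (psi n s) (tensor_id d F) - F (\<lambda>i. i < d) (\<lambda>i. i < d) * ps) \<le> 3 * sqrt (1 - ps)"
    using expect_psi_approx[OF n _ dn F, of s] s s0 x[OF s] by (metis order_trans)
  obtain pr where pr: "0 \<le> pr" "pr \<le> 1" "1 - pr \<le> x"
    "cmod (expect n (psi n r) (tensor_id d F) - F (\<lambda>i. i < d) (\<lambda>i. i < d) * pr) \<le> 3 * sqrt (1 - pr)"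
    using expect_psi_approx[OF n _ dn F, of r] r s0 x[OF r] by (metis order_trans)
  have corner: "cmod (F (\<lambda>i. i < d) (\<lambda>i. i < d)) \<le> 1"
    by (rule norm_entry_le_1[OF F]) (auto simp: basis_def)
  show "cmod (expect n (psi n s) (tensor_id d F) - expect n (psi n r) (tensor_id d F))
      \<le> 11 * sqrt (real d * real s0 / real n)"
  proof (cases "s0 = 0")
    case False
    have "cmod (expect n (psi n s) (tensor_id d F) - expect n (psi n r) (tensor_id d F)) \<le> 7 * sqrt x"
      by (rule norm_diff_le_of_approx[OF corner ps(4) pr(4) ps(1,2) pr(1,2) ps(3) pr(3)])
    also have "\<dots> \<le> 11 * sqrt (real d * real s0 / real n)"
      unfolding x_def using False by (intro seven_sqrt_Suc_le) simp
    finally show ?thesis .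
  qed (use r s in simp)
qed

end
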